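(* Let $F$ be a rooted forest, let $U_1,U_2$ be a partition of $V(F)$ into convex subsets, and let $m_1,m_2\in\mathbb{N}_0$. Then $\mathrm{OPTZ}(F[U_1],m_1)+\mathrm{OPTZ}(F[U_2],m_2)\le\mathrm{OPTZ}(F,m_1+m_2)$.
   Context: A set $U\subseteq V(F)$ is convex if any two vertices of $U$ connected in $F$ are also connected in the induced subforest $F[U]$. A tree-sum data structure is initialized with a weighted rooted forest $(F,w)$ with weights in a commutative group $G$ (some vertices may be auxiliary: weight $0$, no operation applies to them) and processes online $\textsf{cut}(v)$ (delete the edge from $v$ to its parent; legal only if $v$ is not a root), $\textsf{update-weight}(v,x)$ and $\textsf{tree-sum}(v)$ (sum of weights of the tree of the current forest containing $v$), in the group model (group elements may only be added and subtracted, no other inspection; correct for every commutative group). An initial-zero tree-sum data structure is one that only accepts initial forests in which all weights are zero. $\mathrm{OPTZ}(F,m)$ is the minimum, over initial-zero tree-sum data structures $D$, of the maximum number of group additions and subtractions $D$ performs when executing a legal sequence of $m$ operations starting from $F$ with zero weights, maximized over operation sequences. *)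

theory Defs
  imports Main
begin

record 'v rforest =
  verts :: "'v set"
  par   :: "'v \<Rightarrow> 'v option"
  aux   :: "'v set"

definition pedges :: "'v rforest \<Rightarrow> ('v \<times> 'v) set" where
  "pedges F = {(v, u). par F v = Some u}"

definition rooted_forest :: "'v rforest \<Rightarrow> bool" where
  "rooted_forest F \<longleftrightarrow> finite (verts F) \<and> aux F \<subseteq> verts F \<and>
     (\<forall>v u. par F v = Some u \<longrightarrow> v \<in> verts F \<and> u \<in> verts F) \<and>
     acyclic (pedges F)"

definition connected :: "'v rforest \<Rightarrow> 'v \<Rightarrow> 'v \<Rightarrow> bool" where
  "connected F u v \<longleftrightarrow> u \<in> verts F \<and> v \<in> verts F \<and>
     (u, v) \<in> (pedges F \<union> (pedges F)\<inverse>)\<^sup>*"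

definition induced :: "'v rforest \<Rightarrow> 'v set \<Rightarrow> 'v rforest" where
  "induced F U = \<lparr> verts = verts F \<inter> U,
     par = (\<lambda>v. if v \<in> U then (case par F v of None \<Rightarrow> None
                                   | Some u \<Rightarrow> if u \<in> U then Some u else None)
                 else None),
     aux = aux F \<inter> U \<rparr>"

definition convex :: "'v rforest \<Rightarrow> 'v set \<Rightarrow> bool" where
  "convex F U \<longleftrightarrow> U \<subseteq> verts F \<and>
     (\<forall>u\<in>U. \<forall>v\<in>U. connected F u v \<longrightarrow> connected (induced F U) u v)"

text \<open>Operation descriptors; the group argument of the i-th operation (if it is an
  update) is the formal generator number i.\<close>
datatype 'v op = Cut 'v | Upd 'v | Qry 'v

fun apply_op :: "'v rforest \<Rightarrow> 'v op \<Rightarrow> 'v rforest" where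
  "apply_op F (Cut v) = F\<lparr>par := (par F)(v := None)\<rparr>"
| "apply_op F (Upd v) = F"
| "apply_op F (Qry v) = F"

definition cur :: "'v rforest \<Rightarrow> 'v op list \<Rightarrow> nat \<Rightarrow> 'v rforest" where
  "cur F ops i = foldl apply_op F (take i ops)"

fun legal_op :: "'v rforest \<Rightarrow> 'v op \<Rightarrow> bool" where
  "legal_op G (Cut v) \<longleftrightarrow> v \<in> verts G \<and> v \<notin> aux G \<and> par G v \<noteq> None"
| "legal_op G (Upd v) \<longleftrightarrow> v \<in> verts G \<and> v \<notin> aux G"
| "legal_op G (Qry v) \<longleftrightarrow> v \<in> verts G \<and> v \<notin> aux G"

definition legal :: "'v rforest \<Rightarrow> 'v op list \<Rightarrow> bool" where
  "legal F ops \<longleftrightarrow> (\<forall>i < length ops. legal_op (cur F ops i) (ops ! i))"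

section \<open>Formal group values (free commutative group on the update arguments)\<close>

type_synonym fval = "nat \<Rightarrow> int"

definition gen :: "nat \<Rightarrow> fval" where
  "gen i = (\<lambda>k. if k = i then 1 else 0)"

text \<open>Weight of u before operation i (initial weights are all zero;
  update-weight sets the weight).\<close>
definition wt :: "'v op list \<Rightarrow> nat \<Rightarrow> 'v \<Rightarrow> fval" where
  "wt ops i u = (if \<exists>j<i. ops ! j = Upd u
                 then gen (GREATEST j. j < i \<and> ops ! j = Upd u)
                 else (\<lambda>_. 0))"

definition tsum :: "'v rforest \<Rightarrow> 'v op list \<Rightarrow> nat \<Rightarrow> 'v \<Rightarrow> fval" where
  "tsum F ops i v = (\<lambda>k. \<Sum>u \<in> {u. connected (cur F ops i) u v}. wt ops i u k)"

datatype operand = Cell nat | Inp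
datatype instr = Mov nat operand | Add nat operand operand | Sub nat operand operand

type_synonym mem = "nat \<Rightarrow> fval"

fun ev :: "fval \<Rightarrow> mem \<Rightarrow> operand \<Rightarrow> fval" where
  "ev x M (Cell c) = M c"
| "ev x M Inp = x"

fun exec_instr :: "fval \<Rightarrow> instr \<Rightarrow> mem \<Rightarrow> mem" where
  "exec_instr x (Mov t a) M = M(t := ev x M a)"
| "exec_instr x (Add t a b) M = M(t := (\<lambda>k. ev x M a k + ev x M b k))"
| "exec_instr x (Sub t a b) M = M(t := (\<lambda>k. ev x M a k - ev x M b k))"

definition exec_prog :: "fval \<Rightarrow> instr list \<Rightarrow> mem \<Rightarrow> mem" where
  "exec_prog x is M = fold (exec_instr x) is M"

text \<open>A data structure (for a fixed initial forest) maps the history of operation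
  descriptors (ending with the current one) to a straight-line program and the
  cell holding the answer. Control flow may depend on anything but group values.\<close>
type_synonym 'v ds = "'v op list \<Rightarrow> instr list \<times> nat"

definition inp :: "'v op list \<Rightarrow> nat \<Rightarrow> fval" where
  "inp ops i = (case ops ! i of Upd _ \<Rightarrow> gen i | _ \<Rightarrow> (\<lambda>_. 0))"

fun memAt :: "'v ds \<Rightarrow> 'v op list \<Rightarrow> nat \<Rightarrow> mem" where
  "memAt D ops 0 = (\<lambda>_ _. 0)"
| "memAt D ops (Suc i) = exec_prog (inp ops i) (fst (D (take (Suc i) ops))) (memAt D ops i)"

definition correct :: "'v rforest \<Rightarrow> 'v ds \<Rightarrow> bool" where
  "correct F D \<longleftrightarrow> (\<forall>ops. legal F ops \<longrightarrow>
     (\<forall>i < length ops. \<forall>v. ops ! i = Qry v \<longrightarrow>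
        memAt D ops (Suc i) (snd (D (take (Suc i) ops))) = tsum F ops i v))"

fun icost :: "instr \<Rightarrow> nat" where
  "icost (Mov _ _) = 0"
| "icost (Add _ _ _) = 1"
| "icost (Sub _ _ _) = 1"

definition cost :: "'v ds \<Rightarrow> 'v op list \<Rightarrow> nat" where
  "cost D ops = (\<Sum>i < length ops. sum_list (map icost (fst (D (take (Suc i) ops)))))"

definition OPTZ :: "'v rforest \<Rightarrow> nat \<Rightarrow> nat" where
  "OPTZ F m = (LEAST k. \<exists>D. correct F D \<and>
      (\<forall>ops. legal F ops \<and> length ops = m \<longrightarrow> cost D ops \<le> k))"

end

(* Let D be optimal for F and m1 + m2 operations. Convexity of U1 survives every
   set of cuts, so tree sums of F[U1] coincide with those of F and D is correct for
   F[U1]; hence some sequence ops1 of at most m1 operations costs D at least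
   OPTZ(F[U1], m1). Since ops1 only cuts edges inside U1, D run after ops1 is a data
   structure for F[U2] (its memory is that of D on ops1 @ ys with the generators of
   ops1 shifted away), and some ops2 of at most m2 operations costs it at least
   OPTZ(F[U2], m2). Padded with queries, ops1 @ ops2 is a legal sequence of m1 + m2
   operations for F on which D spends at least the sum. *)

theory Submission
  imports Defs
begin

section \<open>Paths along a single-valued relation\<close>

lemma single_valued_symcl_rtrancl_iff:
  assumes "single_valued E"
  shows "(u, v) \<in> (E \<union> E\<inverse>)\<^sup>* \<longleftrightarrow> (\<exists>w. (u, w) \<in> E\<^sup>* \<and> (v, w) \<in> E\<^sup>*)"
proof
  assume "(u, v) \<in> (E \<union> E\<inverse>)\<^sup>*"
  then show "\<exists>w. (u, w) \<in> E\<^sup>* \<and> (v, w) \<in> E\<^sup>*"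
  proof (induction rule: rtrancl_induct)
    case base
    then show ?case by blast
  next
    case (step y z)
    then obtain w where w: "(u, w) \<in> E\<^sup>*" "(y, w) \<in> E\<^sup>*" by blast
    show ?case
    proof (cases "(y, z) \<in> E")
      case True
      then have "(y, z) \<in> E\<^sup>*" by blast
      from single_valued_confluent[OF assms this w(2)] show ?thesis
      proof
        assume "(w, z) \<in> E\<^sup>*"
        then show ?thesis using w(1) by (meson rtrancl_trans rtrancl.rtrancl_refl)
      qed (use w(1) in blast)
    next
      case False
      then have "(z, y) \<in> E" using step by blast
      then show ?thesis using w by (meson converse_rtrancl_into_rtrancl)
    qed
  qed
next
  assume "\<exists>w. (u, w) \<in> E\<^sup>* \<and> (v, w) \<in> E\<^sup>*"
  then obtain w where "(u, w) \<in> E\<^sup>*" "(w, v) \<in> (E\<inverse>)\<^sup>*"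
    by (auto simp: rtrancl_converse)
  then have "(u, w) \<in> (E \<union> E\<inverse>)\<^sup>*" "(w, v) \<in> (E \<union> E\<inverse>)\<^sup>*"
    by (meson in_rtrancl_UnI)+
  then show "(u, v) \<in> (E \<union> E\<inverse>)\<^sup>*" by (rule rtrancl_trans)
qed

text \<open>Acyclicity makes the R-path from u to w unique, so x lies on the S-path.\<close>
lemma rtrancl_subrel_prefix:
  assumes sv: "single_valued R" and ac: "acyclic R" and SR: "S \<subseteq> R"
    and uw: "(u, w) \<in> S\<^sup>*"
  shows "(u, x) \<in> R\<^sup>* \<Longrightarrow> (x, w) \<in> R\<^sup>* \<Longrightarrow> (u, x) \<in> S\<^sup>*"
  using uw
proof (induction arbitrary: x rule: converse_rtrancl_induct)
  case base
  show ?case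
  proof (rule ccontr)
    assume "(w, x) \<notin> S\<^sup>*"
    then have "(w, x) \<in> R\<^sup>+" using base(1) by (metis rtranclD rtrancl.rtrancl_refl)
    then have "(w, w) \<in> R\<^sup>+" using base(2) by (rule trancl_rtrancl_trancl)
    then show False using ac by (simp add: acyclic_def)
  qed
next
  case (step y z)
  show ?case
  proof (cases "y = x")
    case False
    then obtain y1 where y1: "(y, y1) \<in> R" "(y1, x) \<in> R\<^sup>*"
      using step(4) by (metis converse_rtranclE)
    have "y1 = z" using y1(1) step(1) SR sv by (meson single_valuedD subsetD)
    then show ?thesis using step y1 by (meson converse_rtrancl_into_rtrancl)
  qed simp
qed

lemma rtrancl_Int_of_single_valued:
  assumes sv: "single_valued R" and SR: "S \<subseteq> R" and TR: "T \<subseteq> R"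
    and uw: "(u, w) \<in> S\<^sup>*"
  shows "(u, w) \<in> T\<^sup>* \<Longrightarrow> (u, w) \<in> (S \<inter> T)\<^sup>*"
  using uw
proof (induction rule: converse_rtrancl_induct)
  case (step y z)
  show ?case
  proof (cases "y = w")
    case False
    then obtain y1 where y1: "(y, y1) \<in> T" "(y1, w) \<in> T\<^sup>*"
      using step(4) by (meson converse_rtranclE)
    have "y1 = z" using y1(1) step(1) SR TR sv by (meson single_valuedD subsetD)
    then show ?thesis using step y1 by (meson IntI converse_rtrancl_into_rtrancl)
  qed simp
qed simp

lemma rtrancl_common_successor_Int:
  assumes sv: "single_valued R" and ac: "acyclic R" and SR: "S \<subseteq> R" and TR: "T \<subseteq> R"
    and w: "(u, w) \<in> S\<^sup>*" "(v, w) \<in> S\<^sup>*" and w': "(u, w') \<in> T\<^sup>*" "(v, w') \<in> T\<^sup>*"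
  shows "\<exists>z. (u, z) \<in> (S \<inter> T)\<^sup>* \<and> (v, z) \<in> (S \<inter> T)\<^sup>*"
proof -
  have wR: "(u, w) \<in> R\<^sup>*" "(v, w) \<in> R\<^sup>*" using w rtrancl_mono[OF SR] by blast+
  have w'R: "(u, w') \<in> R\<^sup>*" "(v, w') \<in> R\<^sup>*" using w' rtrancl_mono[OF TR] by blast+
  obtain z where "(u, z) \<in> S\<^sup>*" "(v, z) \<in> S\<^sup>*" "(u, z) \<in> T\<^sup>*" "(v, z) \<in> T\<^sup>*"
    using single_valued_confluent[OF sv wR(1) w'R(1)]
  proof
    assume "(w, w') \<in> R\<^sup>*"
    then show thesis
      using that w rtrancl_subrel_prefix[OF sv ac TR w'(1) wR(1)]
        rtrancl_subrel_prefix[OF sv ac TR w'(2) wR(2)] by blast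
  next
    assume "(w', w) \<in> R\<^sup>*"
    then show thesis
      using that w' rtrancl_subrel_prefix[OF sv ac SR w(1) w'R(1)]
        rtrancl_subrel_prefix[OF sv ac SR w(2) w'R(2)] by blast
  qed
  then show ?thesis using rtrancl_Int_of_single_valued[OF sv SR TR] by blast
qed

section \<open>Forests with deleted parent edges\<close>

definition cut_forest :: "'v rforest \<Rightarrow> 'v set \<Rightarrow> 'v rforest" where
  "cut_forest G C = G\<lparr>par := (\<lambda>v. if v \<in> C then None else par G v)\<rparr>"

definition cut_vertices :: "'v op list \<Rightarrow> 'v set" where
  "cut_vertices ops = {v. Cut v \<in> set ops}"

lemma verts_cut_forest [simp]: "verts (cut_forest G C) = verts G"
  and aux_cut_forest [simp]: "aux (cut_forest G C) = aux G"
  and par_cut_forest: "par (cut_forest G C) v = (if v \<in> C then None else par G v)"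
  by (simp_all add: cut_forest_def)

lemma verts_induced [simp]: "verts (induced G U) = verts G \<inter> U"
  by (simp add: induced_def)

lemma cut_vertices_append [simp]: "cut_vertices (xs @ ys) = cut_vertices xs \<union> cut_vertices ys"
  by (auto simp: cut_vertices_def)

lemma foldl_apply_op: "foldl apply_op G ops = cut_forest G (cut_vertices ops)"
proof (induction ops arbitrary: G)
  case Nil
  show ?case by (simp add: cut_forest_def cut_vertices_def)
next
  case (Cons a ops)
  show ?case by (cases a) (auto simp: Cons cut_forest_def cut_vertices_def fun_eq_iff)
qed

lemma cur_eq_cut_forest: "cur G ops i = cut_forest G (cut_vertices (take i ops))"
  by (simp add: cur_def foldl_apply_op)

lemma verts_cur [simp]: "verts (cur G ops i) = verts G"
  and aux_cur [simp]: "aux (cur G ops i) = aux G"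
  by (simp_all add: cur_eq_cut_forest)

lemma cut_forest_induced: "cut_forest (induced G U) C = induced (cut_forest G C) U"
  by (simp add: induced_def cut_forest_def fun_eq_iff)

lemma induced_cut_forest_cong:
  "C \<inter> U = C' \<inter> U \<Longrightarrow> induced (cut_forest G C) U = induced (cut_forest G C') U"
  by (auto simp: induced_def cut_forest_def fun_eq_iff)

lemma single_valued_pedges: "single_valued (pedges G)"
  by (auto simp: single_valued_def pedges_def)

lemma pedges_cut_forest_subset: "pedges (cut_forest G C) \<subseteq> pedges G"
  by (auto simp: pedges_def par_cut_forest split: if_splits)

lemma pedges_induced: "pedges (induced G U) = pedges G \<inter> (U \<times> U)"
  by (auto simp: pedges_def induced_def split: option.splits if_splits)

lemma connected_mono:
  assumes "connected H u v" and "verts H \<subseteq> verts G" and "pedges H \<subseteq> pedges G"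
  shows "connected G u v"
proof -
  have "(pedges H \<union> (pedges H)\<inverse>)\<^sup>* \<subseteq> (pedges G \<union> (pedges G)\<inverse>)\<^sup>*"
    using assms(3) by (intro rtrancl_mono) blast
  then show ?thesis using assms(1,2) by (auto simp: connected_def)
qed

lemma connected_induced_imp_connected: "connected (induced G U) u v \<Longrightarrow> connected G u v"
  by (erule connected_mono) (auto simp: pedges_induced)

lemma connected_induced_imp_mem: "connected (induced G U) u v \<Longrightarrow> u \<in> U"
  by (simp add: connected_def)

text \<open>u and v have a common ancestor in the cut forest and one in F[U]; the nearer of
  the two is a common ancestor in both.\<close>
lemma convex_cut_forest:
  assumes rf: "rooted_forest F" and cv: "convex F U"
  shows "convex (cut_forest F C) U"
  unfolding convex_def
proof (intro conjI ballI impI)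
  show UV: "U \<subseteq> verts (cut_forest F C)" using cv by (simp add: convex_def)
  fix u v assume u: "u \<in> U" and v: "v \<in> U" and conn: "connected (cut_forest F C) u v"
  define S where "S = pedges (cut_forest F C)"
  define T where "T = pedges (induced F U)"
  have SF: "S \<subseteq> pedges F" unfolding S_def by (rule pedges_cut_forest_subset)
  have TF: "T \<subseteq> pedges F" unfolding T_def by (simp add: pedges_induced)
  obtain w where w: "(u, w) \<in> S\<^sup>*" "(v, w) \<in> S\<^sup>*"
    using conn single_valued_symcl_rtrancl_iff[OF single_valued_pedges[of "cut_forest F C"]]
    by (auto simp: connected_def S_def)
  have "connected F u v"
    by (rule connected_mono[OF conn]) (simp_all add: pedges_cut_forest_subset)
  then have "connected (induced F U) u v" using cv u v by (simp add: convex_def)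
  then obtain w' where w': "(u, w') \<in> T\<^sup>*" "(v, w') \<in> T\<^sup>*"
    using single_valued_symcl_rtrancl_iff[OF single_valued_pedges[of "induced F U"]]
    by (auto simp: connected_def T_def)
  have "acyclic (pedges F)" using rf by (simp add: rooted_forest_def)
  then obtain z where "(u, z) \<in> (S \<inter> T)\<^sup>*" "(v, z) \<in> (S \<inter> T)\<^sup>*"
    using rtrancl_common_successor_Int[OF single_valued_pedges _ SF TF w w'] by blast
  moreover have "single_valued (S \<inter> T)"
    by (rule single_valued_subset[OF _ single_valued_pedges]) (use SF in blast)
  moreover have "pedges (induced (cut_forest F C) U) = S \<inter> T"
    using SF unfolding S_def T_def by (auto simp: pedges_induced)
  ultimately show "connected (induced (cut_forest F C) U) u v"
    using single_valued_symcl_rtrancl_iff u v UV by (fastforce simp: connected_def)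
qed

lemma sum_component_induced:
  assumes fin: "finite (verts G)" and cv: "convex G U" and v: "v \<in> U"
    and f0: "\<And>u. u \<notin> U \<Longrightarrow> f u = 0"
  shows "(\<Sum>u \<in> {u. connected G u v}. f u) = (\<Sum>u \<in> {u. connected (induced G U) u v}. f u)"
proof -
  have fin_comp: "finite {u. connected G u v}"
    using fin by (rule finite_subset[rotated]) (auto simp: connected_def)
  have "connected (induced G U) u v \<longleftrightarrow> connected G u v \<and> u \<in> U" for u
    using cv v connected_induced_imp_connected[of G U u v] connected_induced_imp_mem[of G U u v]
    unfolding convex_def by blast
  then have "{u. connected (induced G U) u v} = {u. connected G u v} \<inter> U" by blast
  then show ?thesis
    using f0 by (auto intro: sum.mono_neutral_right[OF fin_comp])
qed

section \<open>Legal sequences and tree sums\<close>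

fun op_vertex :: "'v op \<Rightarrow> 'v" where
  "op_vertex (Cut v) = v"
| "op_vertex (Upd v) = v"
| "op_vertex (Qry v) = v"

lemma legal_nth_vertex:
  assumes "legal G ops" and "j < length ops"
  shows "op_vertex (ops ! j) \<in> verts G - aux G"
proof -
  have "legal_op (cur G ops j) (ops ! j)" using assms by (simp add: legal_def)
  then show ?thesis by (cases "ops ! j") auto
qed

lemma cut_vertices_subset_induced: "legal (induced F U) ops \<Longrightarrow> cut_vertices ops \<subseteq> U"
  by (auto simp: cut_vertices_def in_set_conv_nth dest!: legal_nth_vertex)

lemma legal_op_cut_forest_induced:
  assumes "legal_op (cut_forest (induced F U) C) op" and "\<And>v. op = Cut v \<Longrightarrow> v \<notin> C'"
  shows "legal_op (cut_forest F (C \<union> C')) op"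
  using assms
  by (cases op) (auto simp: par_cut_forest induced_def split: if_splits option.splits)

lemma legal_append_induced:
  assumes xs: "legal F xs" and ys: "legal (induced F U) ys"
    and disj: "cut_vertices xs \<inter> U = {}"
  shows "legal F (xs @ ys)"
  unfolding legal_def
proof (intro allI impI)
  fix i assume i: "i < length (xs @ ys)"
  show "legal_op (cur F (xs @ ys) i) ((xs @ ys) ! i)"
  proof (cases "i < length xs")
    case True
    then show ?thesis using xs by (simp add: legal_def cur_def nth_append)
  next
    case False
    define j where "j = i - length xs"
    have j: "j < length ys" "i = length xs + j" using i False by (auto simp: j_def)
    have "legal_op (cut_forest (induced F U) (cut_vertices (take j ys))) (ys ! j)"
      using ys j by (simp add: legal_def cur_eq_cut_forest)
    then have "legal_op (cut_forest F (cut_vertices (take j ys) \<union> cut_vertices xs)) (ys ! j)"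
    proof (rule legal_op_cut_forest_induced)
      fix v assume "ys ! j = Cut v"
      then have "v \<in> U" using legal_nth_vertex[OF ys j(1)] by simp
      then show "v \<notin> cut_vertices xs" using disj by blast
    qed
    then show ?thesis using j by (simp add: cur_eq_cut_forest nth_append Un_commute)
  qed
qed

lemma legal_append_replicate_Qry:
  assumes "legal G ops" and "a \<in> verts G - aux G"
  shows "legal G (ops @ replicate n (Qry a))"
  unfolding legal_def
proof (intro allI impI)
  fix i assume "i < length (ops @ replicate n (Qry a))"
  then show "legal_op (cur G (ops @ replicate n (Qry a)) i) ((ops @ replicate n (Qry a)) ! i)"
    using assms by (cases "i < length ops") (auto simp: legal_def cur_eq_cut_forest nth_append)
qed

definition latest_upd :: "'v op list \<Rightarrow> nat \<Rightarrow> 'v \<Rightarrow> nat \<Rightarrow> bool" where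
  "latest_upd ops i u j \<longleftrightarrow>
     j < i \<and> ops ! j = Upd u \<and> (\<forall>j'. j < j' \<and> j' < i \<longrightarrow> ops ! j' \<noteq> Upd u)"

lemma wt_eq_latest_upd: "wt ops i u k = of_bool (latest_upd ops i u k)"
proof (cases "\<exists>j<i. ops ! j = Upd u")
  case True
  define g where "g = (GREATEST j. j < i \<and> ops ! j = Upd u)"
  have g: "g < i \<and> ops ! g = Upd u"
    unfolding g_def using True by (metis (mono_tags, lifting) GreatestI_nat less_imp_le)
  have g_max: "j \<le> g" if "j < i" "ops ! j = Upd u" for j
    unfolding g_def using that by (metis (mono_tags, lifting) Greatest_le_nat less_imp_le)
  have "latest_upd ops i u k \<longleftrightarrow> k = g"
    using g g_max unfolding latest_upd_def by (metis le_antisym not_le)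
  then show ?thesis using True by (simp add: wt_def gen_def g_def)
qed (auto simp: wt_def latest_upd_def)

lemma latest_upd_append:
  "latest_upd (xs @ ys) (length xs + i) u (k + length xs) \<longleftrightarrow> latest_upd ys i u k"
proof -
  have "(\<forall>j'. k + length xs < j' \<and> j' < length xs + i \<longrightarrow> (xs @ ys) ! j' \<noteq> Upd u)
      \<longleftrightarrow> (\<forall>j'. k < j' \<and> j' < i \<longrightarrow> ys ! j' \<noteq> Upd u)"
  proof
    assume later: "\<forall>j'. k + length xs < j' \<and> j' < length xs + i \<longrightarrow> (xs @ ys) ! j' \<noteq> Upd u"
    show "\<forall>j'. k < j' \<and> j' < i \<longrightarrow> ys ! j' \<noteq> Upd u"
    proof (intro allI impI)
      fix j' assume "k < j' \<and> j' < i"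
      then show "ys ! j' \<noteq> Upd u" using later[rule_format, of "length xs + j'"] by simp
    qed
  next
    assume later: "\<forall>j'. k < j' \<and> j' < i \<longrightarrow> ys ! j' \<noteq> Upd u"
    show "\<forall>j'. k + length xs < j' \<and> j' < length xs + i \<longrightarrow> (xs @ ys) ! j' \<noteq> Upd u"
    proof (intro allI impI)
      fix j' assume j': "k + length xs < j' \<and> j' < length xs + i"
      then have "k < j' - length xs \<and> j' - length xs < i" by linarith
      then show "(xs @ ys) ! j' \<noteq> Upd u" using later j' by (simp add: nth_append)
    qed
  qed
  then show ?thesis by (auto simp: latest_upd_def nth_append)
qed

text \<open>Prepending l operations renames the generator of the k-th update to k + l;
  shift l undoes this renaming.\<close>
definition shift :: "nat \<Rightarrow> fval \<Rightarrow> fval" where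
  "shift l f = (\<lambda>k. f (k + l))"

lemma wt_eq_zero_outside:
  assumes "legal (induced F U) ops" and "i \<le> length ops" and "u \<notin> U"
  shows "wt ops i u k = 0"
proof -
  have "\<not> latest_upd ops i u k"
  proof
    assume "latest_upd ops i u k"
    then have "k < length ops" "ops ! k = Upd u" using assms(2) by (auto simp: latest_upd_def)
    then show False using legal_nth_vertex[OF assms(1)] assms(3) by fastforce
  qed
  then show ?thesis by (simp add: wt_eq_latest_upd)
qed

lemma shift_tsum_append_induced:
  assumes rf: "rooted_forest F" and cv: "convex F U" and ys: "legal (induced F U) ys"
    and i: "i < length ys" and q: "ys ! i = Qry v" and disj: "cut_vertices xs \<inter> U = {}"
  shows "shift (length xs) (tsum F (xs @ ys) (length xs + i) v) = tsum (induced F U) ys i v"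
proof
  fix k
  define C where "C = cut_vertices xs \<union> cut_vertices (take i ys)"
  have v: "v \<in> U" using legal_nth_vertex[OF ys i] q by simp
  have cur_F: "cur F (xs @ ys) (length xs + i) = cut_forest F C"
    by (simp add: cur_eq_cut_forest C_def)
  have "cur (induced F U) ys i = induced (cut_forest F (cut_vertices (take i ys))) U"
    by (simp add: cur_eq_cut_forest cut_forest_induced)
  also have "\<dots> = induced (cut_forest F C) U"
    unfolding C_def by (rule induced_cut_forest_cong) (use disj in blast)
  finally have cur_U: "cur (induced F U) ys i = induced (cut_forest F C) U" .
  have fin: "finite (verts (cut_forest F C))" using rf by (simp add: rooted_forest_def)
  have "shift (length xs) (tsum F (xs @ ys) (length xs + i) v) k
      = (\<Sum>u \<in> {u. connected (cut_forest F C) u v}. wt ys i u k)"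
    by (simp add: shift_def tsum_def cur_F wt_eq_latest_upd latest_upd_append)
  also have "\<dots> = (\<Sum>u \<in> {u. connected (induced (cut_forest F C) U) u v}. wt ys i u k)"
    using fin convex_cut_forest[OF rf cv] v
    by (rule sum_component_induced) (use wt_eq_zero_outside[OF ys] i in auto)
  also have "\<dots> = tsum (induced F U) ys i v k"
    by (simp add: tsum_def cur_U)
  finally show "shift (length xs) (tsum F (xs @ ys) (length xs + i) v) k
      = tsum (induced F U) ys i v k" .
qed

section \<open>Running a data structure after a prefix\<close>

lemma exec_prog_Nil [simp]: "exec_prog x [] M = M"
  and exec_prog_Cons [simp]: "exec_prog x (ins # is) M = exec_prog x is (exec_instr x ins M)"
  by (simp_all add: exec_prog_def)

lemma exec_prog_shift:
  "exec_prog (shift l x) is (\<lambda>c. shift l (M c)) = (\<lambda>c. shift l (exec_prog x is M c))"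
proof (induction "is" arbitrary: M)
  case (Cons ins "is")
  have "ev (shift l x) (\<lambda>c. shift l (M c)) a = shift l (ev x M a)" for a
    by (cases a) auto
  then have "exec_instr (shift l x) ins (\<lambda>c. shift l (M c)) = (\<lambda>c. shift l (exec_instr x ins M c))"
    by (cases ins) (auto simp: fun_eq_iff shift_def)
  then show ?case by (simp add: Cons)
qed simp

lemma exec_prog_vanishing:
  assumes "\<forall>k\<ge>n. x k = 0" and "\<forall>c. \<forall>k\<ge>n. M c k = 0" and "n \<le> k"
  shows "exec_prog x is M c k = 0"
  using assms(2,3)
proof (induction "is" arbitrary: M c)
  case (Cons ins "is")
  have "\<forall>k\<ge>n. ev x M a k = 0" for a using assms(1) Cons.prems(1) by (cases a) auto
  then have "\<forall>c. \<forall>k\<ge>n. exec_instr x ins M c k = 0"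
    using Cons.prems(1) by (cases ins) auto
  then show ?case using Cons by simp
qed simp

lemma memAt_vanishing: "n \<le> k \<Longrightarrow> memAt D ops n c k = 0"
proof (induction n arbitrary: c k)
  case (Suc n)
  have "\<forall>k\<ge>Suc n. inp ops n k = 0" by (auto simp: inp_def gen_def split: op.splits)
  then show ?case using Suc by (auto intro: exec_prog_vanishing)
qed simp

lemma memAt_append:
  "memAt (\<lambda>zs. D (xs @ zs)) ys i = (\<lambda>c. shift (length xs) (memAt D (xs @ ys) (length xs + i) c))"
proof (induction i)
  case 0
  show ?case by (auto simp: fun_eq_iff shift_def memAt_vanishing)
next
  case (Suc i)
  have "take (Suc (length xs + i)) (xs @ ys) = xs @ take (Suc i) ys" by simp
  moreover have "shift (length xs) (inp (xs @ ys) (length xs + i)) = inp ys i"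
    by (cases "ys ! i") (auto simp: inp_def shift_def gen_def nth_append fun_eq_iff)
  ultimately show ?case by (simp add: Suc exec_prog_shift[symmetric])
qed

lemma cost_append: "cost D (xs @ ys) = cost D xs + cost (\<lambda>zs. D (xs @ zs)) ys"
proof -
  have split: "(\<Sum>i<a + b. f i) = (\<Sum>i<a. f i) + (\<Sum>i<b. f (a + i))" for a b and f :: "nat \<Rightarrow> nat"
    by (induction b) (simp_all add: add.assoc)
  let ?c = "\<lambda>i. sum_list (map icost (fst (D (take (Suc i) (xs @ ys)))))"
  have "cost D (xs @ ys) = (\<Sum>i<length xs. ?c i) + (\<Sum>i<length ys. ?c (length xs + i))"
    unfolding cost_def length_append by (rule split)
  also have "(\<Sum>i<length xs. ?c i) = cost D xs"
    unfolding cost_def by (rule sum.cong) auto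
  also have "(\<Sum>i<length ys. ?c (length xs + i)) = cost (\<lambda>zs. D (xs @ zs)) ys"
    unfolding cost_def by (rule sum.cong) auto
  finally show ?thesis .
qed

section \<open>A correct data structure\<close>

definition tree_upds :: "'v rforest \<Rightarrow> 'v op list \<Rightarrow> nat \<Rightarrow> 'v \<Rightarrow> nat set" where
  "tree_upds F ops i v = {j. \<exists>u. connected (cur F ops i) u v \<and> latest_upd ops i u j}"

lemma tree_upds_subset: "tree_upds F ops i v \<subseteq> {..<i}"
  by (auto simp: tree_upds_def latest_upd_def)

lemma finite_tree_upds [simp]: "finite (tree_upds F ops i v)"
  using tree_upds_subset by (rule finite_subset) simp

lemma tree_upds_take: "tree_upds F (take (Suc i) ops) i v = tree_upds F ops i v"
proof -
  have "cur F (take (Suc i) ops) i = cur F ops i" by (simp add: cur_def min_def)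
  moreover have "latest_upd (take (Suc i) ops) i u j \<longleftrightarrow> latest_upd ops i u j" for u j
    by (auto simp: latest_upd_def)
  ultimately show ?thesis by (simp add: tree_upds_def)
qed

text \<open>Each u contributes the generator of its latest update, and distinct vertices
  have distinct latest updates.\<close>
lemma tsum_eq_tree_upds:
  assumes "finite (verts F)"
  shows "tsum F ops i v = (\<lambda>k. of_bool (k \<in> tree_upds F ops i v))"
proof
  fix k
  define A where "A = {u. connected (cur F ops i) u v}"
  have fin: "finite A" using assms by (rule finite_subset[rotated]) (auto simp: A_def connected_def)
  have tsum: "tsum F ops i v k = (\<Sum>u\<in>A. of_bool (latest_upd ops i u k))"
    by (simp add: tsum_def A_def wt_eq_latest_upd)
  show "tsum F ops i v k = of_bool (k \<in> tree_upds F ops i v)"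
  proof (cases "\<exists>u\<in>A. latest_upd ops i u k")
    case True
    then obtain u0 where u0: "u0 \<in> A" "latest_upd ops i u0 k" by blast
    then have "latest_upd ops i u k \<longleftrightarrow> u = u0" for u by (auto simp: latest_upd_def)
    then have "tsum F ops i v k = (\<Sum>u\<in>A. of_bool (u = u0))" by (simp add: tsum)
    also have "\<dots> = 1" using fin u0(1) by (simp add: of_bool_def)
    finally show ?thesis using True by (auto simp: tree_upds_def A_def)
  next
    case False
    then show ?thesis by (auto simp: tsum tree_upds_def A_def)
  qed
qed

text \<open>Cell j receives the argument of operation j; a query sums the cells of the
  latest updates in its tree. Its only role is to make OPTZ a minimum over a
  nonempty set.\<close>
definition naive :: "'v rforest \<Rightarrow> 'v ds" where
  "naive F xs = (let i = length xs - 1 in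
     (Mov i Inp # (case last xs of
        Qry v \<Rightarrow> map (\<lambda>j. Add i (Cell i) (Cell j)) (sorted_list_of_set (tree_upds F xs i v))
      | _ \<Rightarrow> []), i))"

lemma naive_take:
  assumes "i < length ops"
  shows "naive F (take (Suc i) ops) = (Mov i Inp # (case ops ! i of
      Qry v \<Rightarrow> map (\<lambda>j. Add i (Cell i) (Cell j)) (sorted_list_of_set (tree_upds F ops i v))
    | _ \<Rightarrow> []), i)"
proof -
  have "length (take (Suc i) ops) - 1 = i" and "last (take (Suc i) ops) = ops ! i"
    using assms by (simp_all add: take_Suc_conv_app_nth)
  then show ?thesis by (simp only: naive_def Let_def tree_upds_take)
qed

lemma exec_prog_Adds:
  "t \<notin> set js \<Longrightarrow> exec_prog x (map (\<lambda>j. Add t (Cell t) (Cell j)) js) M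
     = M(t := (\<lambda>k. M t k + (\<Sum>j\<leftarrow>js. M j k)))"
proof (induction js arbitrary: M)
  case (Cons j js)
  have "(\<Sum>j'\<leftarrow>js. (M(t := g)) j' k) = (\<Sum>j'\<leftarrow>js. M j' k)" for g k
    using Cons.prems by (intro arg_cong[where f = sum_list] map_cong) auto
  then show ?case using Cons by (simp add: fun_eq_iff add.assoc)
qed (simp add: fun_eq_iff)

lemma memAt_naive_Suc:
  assumes "i < length ops"
  shows "memAt (naive F) ops (Suc i) = (memAt (naive F) ops i)(i := (case ops ! i of
      Qry v \<Rightarrow> (\<lambda>k. \<Sum>j\<in>tree_upds F ops i v. memAt (naive F) ops i j k)
    | _ \<Rightarrow> inp ops i))"
proof -
  define M where "M = memAt (naive F) ops i"
  have step: "memAt (naive F) ops (Suc i) = exec_prog (inp ops i) (fst (naive F (take (Suc i) ops))) M"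
    by (simp add: M_def)
  show ?thesis
  proof (cases "ops ! i")
    case (Qry v)
    have "i \<notin> set (sorted_list_of_set (tree_upds F ops i v))"
      using tree_upds_subset[of F ops i v] by auto
    then show ?thesis
      unfolding step M_def[symmetric] using assms Qry
      by (auto simp: naive_take exec_prog_Adds sum_list_distinct_conv_sum_set inp_def fun_eq_iff
          intro!: sum.cong)
  qed (use assms in \<open>simp_all add: step M_def[symmetric] naive_take\<close>)
qed

lemma memAt_naive_stable:
  "j < n \<Longrightarrow> n \<le> length ops \<Longrightarrow> memAt (naive F) ops n j = memAt (naive F) ops (Suc j) j"
proof (induction n)
  case (Suc n)
  then show ?case by (cases "j = n") (simp_all add: memAt_naive_Suc del: memAt.simps)
qed simp

lemma correct_naive:
  fixes F :: "'v rforest"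
  assumes "finite (verts F)"
  shows "correct F (naive F)"
  unfolding correct_def
proof (intro allI impI)
  fix ops :: "'v op list" and i v
  assume i: "i < length ops" and q: "ops ! i = Qry v"
  have upd_cell: "memAt (naive F) ops i j = gen j" if "j \<in> tree_upds F ops i v" for j
  proof -
    have j: "j < i" and "\<exists>u. ops ! j = Upd u"
      using that by (auto simp: tree_upds_def latest_upd_def)
    then have "memAt (naive F) ops (Suc j) j = gen j"
      using i by (auto simp: memAt_naive_Suc inp_def simp del: memAt.simps)
    then show ?thesis using memAt_naive_stable[OF j, of ops F] i by (simp del: memAt.simps)
  qed
  have "memAt (naive F) ops (Suc i) i = (\<lambda>k. \<Sum>j\<in>tree_upds F ops i v. gen j k)"
    using i q upd_cell by (simp add: memAt_naive_Suc del: memAt.simps)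
  also have "\<dots> = tsum F ops i v"
    unfolding tsum_eq_tree_upds[OF assms] by (simp add: gen_def of_bool_def)
  moreover have "snd (naive F (take (Suc i) ops)) = i" using i by (simp add: naive_take)
  ultimately show "memAt (naive F) ops (Suc i) (snd (naive F (take (Suc i) ops))) = tsum F ops i v"
    by simp
qed

lemma cost_naive: "cost (naive F) ops \<le> length ops * length ops"
proof -
  have step: "sum_list (map icost (fst (naive F (take (Suc i) ops)))) \<le> length ops"
    if i: "i < length ops" for i
  proof (cases "ops ! i")
    case (Qry v)
    have "card (tree_upds F ops i v) \<le> i"
      using card_mono[OF finite_lessThan tree_upds_subset[of F ops i v]] by simp
    then show ?thesis using i Qry by (simp add: naive_take comp_def sum_list_triv)
  qed (use i in \<open>simp_all add: naive_take\<close>)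
  have "cost (naive F) ops \<le> (\<Sum>i<length ops. length ops)"
    unfolding cost_def by (rule sum_mono) (use step in simp)
  then show ?thesis by simp
qed

section \<open>Splitting an optimal data structure\<close>

lemma OPTZ_attained:
  assumes "finite (verts F)"
  shows "\<exists>D. correct F D \<and> (\<forall>ops. legal F ops \<and> length ops = m \<longrightarrow> cost D ops \<le> OPTZ F m)"
  unfolding OPTZ_def
proof (rule LeastI_ex, intro exI conjI allI impI)
  show "correct F (naive F)" by (rule correct_naive[OF assms])
  fix ops assume "legal F ops \<and> length ops = m"
  then show "cost (naive F) ops \<le> m * m" using cost_naive[of F ops] by simp
qed

text \<open>Only length at most m can be asked for: G need not admit any legal sequence
  of length m.\<close>
lemma OPTZ_le_cost:
  assumes "correct G D"
  shows "\<exists>ops. legal G ops \<and> length ops \<le> m \<and> OPTZ G m \<le> cost D ops"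
proof (rule ccontr)
  assume "\<not> ?thesis"
  then have less: "cost D ops < OPTZ G m" if "legal G ops" "length ops \<le> m" for ops
    using that by (meson not_le)
  have "\<exists>D. correct G D \<and> (\<forall>ops. legal G ops \<and> length ops = m \<longrightarrow> cost D ops \<le> OPTZ G m - 1)"
    using assms less by fastforce
  then have "OPTZ G m \<le> OPTZ G m - 1" unfolding OPTZ_def[of G m] by (rule Least_le)
  moreover have "0 < OPTZ G m" using less[of "[]"] by (simp add: legal_def)
  ultimately show False by simp
qed

lemma cost_le_of_length_le:
  assumes bound: "\<forall>ops. legal F ops \<and> length ops = m \<longrightarrow> cost D ops \<le> k"
    and ops: "legal F ops" and len: "length ops \<le> m"
  shows "cost D ops \<le> k"
proof (cases "ops = []")
  case True
  then show ?thesis by (simp add: cost_def)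
next
  case False
  define a where "a = op_vertex (ops ! 0)"
  define pad where "pad = replicate (m - length ops) (Qry a)"
  have "a \<in> verts F - aux F" using legal_nth_vertex[OF ops] False by (simp add: a_def)
  then have "legal F (ops @ pad)" unfolding pad_def by (rule legal_append_replicate_Qry[OF ops])
  moreover have "length (ops @ pad) = m" using len by (simp add: pad_def)
  ultimately have "cost D (ops @ pad) \<le> k" using bound by blast
  then show ?thesis by (simp add: cost_append)
qed

lemma correct_induced_append:
  assumes rf: "rooted_forest F" and cv: "convex F U" and D: "correct F D"
    and xs: "legal F xs" and disj: "cut_vertices xs \<inter> U = {}"
  shows "correct (induced F U) (\<lambda>ys. D (xs @ ys))"
  unfolding correct_def
proof (intro allI impI)
  fix ys i v
  assume ys: "legal (induced F U) ys" and i: "i < length ys" and q: "ys ! i = Qry v"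
  have "memAt D (xs @ ys) (Suc (length xs + i)) (snd (D (take (Suc (length xs + i)) (xs @ ys))))
      = tsum F (xs @ ys) (length xs + i) v"
    using D legal_append_induced[OF xs ys disj] i q unfolding correct_def
    by (metis add_less_cancel_left length_append nth_append_length_plus)
  then have "memAt (\<lambda>zs. D (xs @ zs)) ys (Suc i) (snd (D (xs @ take (Suc i) ys)))
      = shift (length xs) (tsum F (xs @ ys) (length xs + i) v)"
    by (simp add: memAt_append del: memAt.simps)
  also have "\<dots> = tsum (induced F U) ys i v"
    by (rule shift_tsum_append_induced[OF rf cv ys i q disj])
  finally show "memAt (\<lambda>zs. D (xs @ zs)) ys (Suc i) (snd (D (xs @ take (Suc i) ys)))
      = tsum (induced F U) ys i v" .
qed

theorem lemma20:
  fixes F :: "'v rforest" and U1 U2 :: "'v set" and m1 m2 :: nat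
  assumes "rooted_forest F"
    and "U1 \<union> U2 = verts F" and "U1 \<inter> U2 = {}"
    and "convex F U1" and "convex F U2"
  shows "OPTZ (induced F U1) m1 + OPTZ (induced F U2) m2 \<le> OPTZ F (m1 + m2)"
proof -
  note rf = assms(1) and disj = assms(3) and cv1 = assms(4) and cv2 = assms(5)
  obtain D where D: "correct F D"
    and bound: "\<forall>ops. legal F ops \<and> length ops = m1 + m2 \<longrightarrow> cost D ops \<le> OPTZ F (m1 + m2)"
    using OPTZ_attained[of F "m1 + m2"] rf unfolding rooted_forest_def by blast
  have "correct (induced F U1) D"
    using correct_induced_append[OF rf cv1 D, of "[]"] by (simp add: legal_def cut_vertices_def)
  then obtain ops1 where ops1: "legal (induced F U1) ops1" "length ops1 \<le> m1"
    and cost1: "OPTZ (induced F U1) m1 \<le> cost D ops1"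
    using OPTZ_le_cost by blast
  have legal1: "legal F ops1"
    using legal_append_induced[of F "[]", OF _ ops1(1)] by (simp add: legal_def cut_vertices_def)
  have disj1: "cut_vertices ops1 \<inter> U2 = {}" using cut_vertices_subset_induced[OF ops1(1)] disj by blast
  obtain ops2 where ops2: "legal (induced F U2) ops2" "length ops2 \<le> m2"
    and cost2: "OPTZ (induced F U2) m2 \<le> cost (\<lambda>ys. D (ops1 @ ys)) ops2"
    using OPTZ_le_cost[OF correct_induced_append[OF rf cv2 D legal1 disj1]] by blast
  have "cost D (ops1 @ ops2) \<le> OPTZ F (m1 + m2)"
    using cost_le_of_length_le[OF bound legal_append_induced[OF legal1 ops2(1) disj1]] ops1 ops2
    by simp
  then show ?thesis using cost1 cost2 by (simp add: cost_append)
qed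

end
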